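(* Let $F$, $H$, $X$, $\Omega$, $Q$ and the sequences generated by the IneIREG method be as described in the context. Suppose: $(\eta_k)$ is nonincreasing; $\alpha_0\in[0,1]$ and $(\alpha_k/\eta_k)$ is nonincreasing; $\lambda_k\in[\underline\lambda,\overline\lambda]$ for all $k\ge0$ with $0<\underline\lambda\le\overline\lambda\le1/(L_F+\eta_0L_H)$; and $\sum_{k=0}^\infty\delta_k\eta_k^{-1}<+\infty$. For $k\ge1$ let $\Lambda_k=\sum_{j=0}^{k-1}\lambda_j$ and $\overline y_k=\Lambda_k^{-1}\sum_{j=0}^{k-1}\lambda_jy_j$. Then for all $k\ge1$, $$0\le\mathrm{Gap}(\overline y_k,F,X)\le\frac1k\Big(\frac{D_X^2}{2\underline\lambda}\Big)+\frac{\sum_{j=0}^{k-1}\delta_j}{k}\Big(\frac{1}{2\underline\lambda}\Big)+\frac{\sum_{j=0}^{k-1}\eta_j}{k}\Big(\frac{\overline\lambda C_HD_X}{\underline\lambda}\Big).$$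
   Context: Work in $\mathbb{R}^n$ with Euclidean inner product $\langle\cdot,\cdot\rangle$ and norm $\|\cdot\|$. The maps $F\colon \mathrm{Dom}\,F\to\mathbb{R}^n$ and $H\colon\mathrm{Dom}\,H\to\mathbb{R}^n$ are monotone and Lipschitz continuous with constants $L_F>0$ and $L_H>0$. $X$ is a nonempty compact convex set and $\Omega$ a nonempty closed convex set with $X\subset\Omega\subset\mathrm{Dom}\,F\cap\mathrm{Dom}\,H$; $P_X,P_\Omega$ denote orthogonal projections. $Q:=\{x\in X:\langle F(x),y-x\rangle\ge0\ \forall y\in X\}$ is assumed nonempty. $D_X:=\sup_{x,y\in X}\|x-y\|$, $C_H:=\sup_{x\in X}\|H(x)\|$. $\mathrm{Gap}(z,F,X):=\sup_{x\in X}\langle F(x),z-x\rangle$. IneIREG method: start with $x_0=x_{-1}\in X$; for $k=0,1,\dots$, with parameters $\alpha_k\ge0$, $\lambda_k>0$, $\eta_k>0$, set $w_k=x_k+\alpha_k(x_k-x_{k-1})$, $w'_k=P_\Omega(w_k)$, $y_k=P_X\big(w_k-\lambda_k(F(w'_k)+\eta_kH(w'_k))\big)$, $x_{k+1}=P_X\big(w_k-\lambda_k(F(y_k)+\eta_kH(y_k))\big)$. Also $\delta_k:=\alpha_k(1+\alpha_k)\|x_k-x_{k-1}\|^2$ for $k\ge0$. *)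

theory Defs
  imports "HOL-Analysis.Analysis"
begin

definition monotone_op :: "('a::real_inner \<Rightarrow> 'a) \<Rightarrow> 'a set \<Rightarrow> bool" where
  "monotone_op F D \<longleftrightarrow> (\<forall>x\<in>D. \<forall>y\<in>D. inner (F x - F y) (x - y) \<ge> 0)"

definition VI_sol :: "('a::real_inner \<Rightarrow> 'a) \<Rightarrow> 'a set \<Rightarrow> 'a set" where
  "VI_sol F X = {x \<in> X. \<forall>y\<in>X. inner (F x) (y - x) \<ge> 0}"

definition Gap :: "'a::real_inner \<Rightarrow> ('a \<Rightarrow> 'a) \<Rightarrow> 'a set \<Rightarrow> real" where
  "Gap z F X = (SUP x\<in>X. inner (F x) (z - x))"

end

theory Submission
  imports Defs
begin

(* For every z in X, one extragradient step with the regularized operator F + eta_k H gives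
   2 lam_k <F z, y_k - z> <= |w_k - z|^2 - |x_(k+1) - z|^2 + 2 lam_k eta_k C_H D_X,
   by monotonicity of F and the bound |H| <= C_H on X, while the inertial point satisfies
   |w_k - z|^2 = (1 + alpha_k) |x_k - z|^2 - alpha_k |x_(k-1) - z|^2 + delta_k.
   Summed over k, the distance terms telescope to at most D_X^2 because alpha_k is nonincreasing
   (as alpha_k / eta_k and eta_k are) with alpha_0 <= 1, and the left-hand side becomes
   2 Lambda_k <F z, ybar_k - z>.  Taking the supremum over z and using Lambda_k >= k lamlo
   gives the bound. *)

lemma extragradient_projection_ineq:
  fixes w z g1 g2 :: "'a::euclidean_space"
  assumes "convex X" "closed X" and z: "z \<in> X"
    and y: "y = closest_point X (w - lam *\<^sub>R g1)"
    and x': "x' = closest_point X (w - lam *\<^sub>R g2)"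
    and lip: "norm (g2 - g1) \<le> L * norm (y - w)"
    and lam: "0 \<le> lam" "lam * L \<le> 1"
  shows "2 * lam * inner g2 (y - z) \<le> (norm (w - z))\<^sup>2 - (norm (x' - z))\<^sup>2"
proof -
  have x'X: "x' \<in> X"
    using x' closest_point_in_set[OF \<open>closed X\<close>] z by blast
  have proj_x': "inner (w - lam *\<^sub>R g2 - x') (z - x') \<le> 0"
    using closest_point_dot[OF assms(1,2) z] x' by simp
  have proj_y: "inner (w - lam *\<^sub>R g1 - y) (x' - y) \<le> 0"
    using closest_point_dot[OF assms(1,2) x'X] y by simp
  have "lam * inner (g2 - g1) (y - x') \<le> lam * (L * norm (y - w) * norm (y - x'))"
    using norm_cauchy_schwarz[of "g2 - g1" "y - x'"] lip lam(1)
    by (meson mult_left_mono mult_right_mono norm_ge_zero order_trans)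
  also have "\<dots> \<le> norm (y - w) * norm (y - x')"
    using mult_right_mono[OF lam(2), of "norm (y - w) * norm (y - x')"] by (simp add: mult_ac)
  also have "2 * \<dots> \<le> (norm (y - w))\<^sup>2 + (norm (y - x'))\<^sup>2"
    using sum_squares_bound[of "norm (y - w)" "norm (y - x')"] by (simp add: algebra_simps)
  finally have cross: "2 * (lam * inner (g2 - g1) (y - x')) \<le> (norm (y - w))\<^sup>2 + (norm (y - x'))\<^sup>2"
    by simp
  show ?thesis
    using proj_x' proj_y cross
    by (simp add: power2_norm_eq_inner inner_diff_left inner_diff_right inner_commute algebra_simps)
qed

lemma norm_extrapolation_sq:
  fixes u v :: "'a::real_inner"
  shows "(norm ((1 + a) *\<^sub>R u - a *\<^sub>R v))\<^sup>2
    = (1 + a) * (norm u)\<^sup>2 - a * (norm v)\<^sup>2 + a * (1 + a) * (norm (u - v))\<^sup>2"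
  by (simp add: power2_norm_eq_inner inner_diff_left inner_diff_right inner_commute algebra_simps)

lemma inertial_telescoping_le:
  fixes \<phi> \<alpha> :: "nat \<Rightarrow> real"
  assumes \<phi>: "\<And>j. 0 \<le> \<phi> j" "\<And>j. \<phi> j \<le> D"
    and \<alpha>: "\<And>j. 0 \<le> \<alpha> j" "\<And>j. \<alpha> (Suc j) \<le> \<alpha> j" "\<alpha> 0 \<le> 1"
    and k: "k \<ge> 1"
  shows "(\<Sum>j<k. \<phi> j - \<phi> (Suc j) + \<alpha> j * (\<phi> j - \<phi> (j - 1))) \<le> D"
proof -
  have partial: "(\<Sum>j<Suc n. \<phi> j - \<phi> (Suc j) + \<alpha> j * (\<phi> j - \<phi> (j - 1))) + \<phi> (Suc n)
      \<le> (1 - \<alpha> n) * D + \<alpha> n * \<phi> n" for n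
  proof (induction n)
    case 0
    have "(1 - \<alpha> 0) * \<phi> 0 \<le> (1 - \<alpha> 0) * D"
      using \<alpha>(3) \<phi>(2) by (intro mult_left_mono) auto
    then show ?case by (simp add: algebra_simps)
  next
    case (Suc n)
    have "(\<alpha> n - \<alpha> (Suc n)) * \<phi> n \<le> (\<alpha> n - \<alpha> (Suc n)) * D"
      using \<alpha>(2) \<phi>(2) by (intro mult_left_mono) auto
    with Suc.IH show ?case by (simp add: algebra_simps)
  qed
  obtain n where n: "k = Suc n" using k by (cases k) auto
  have "\<alpha> n * \<phi> n \<le> \<alpha> n * D" using \<alpha>(1) \<phi>(2) by (intro mult_left_mono) auto
  with partial[of n] \<phi>(1)[of "Suc n"] show ?thesis by (simp add: n algebra_simps)
qed

lemma nonincreasing_of_ratio_nonincreasing: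
  fixes a e :: "nat \<Rightarrow> real"
  assumes "\<And>k. 0 \<le> a k" "\<And>k. 0 < e k" "\<And>k. e (Suc k) \<le> e k"
    and "\<And>k. a (Suc k) / e (Suc k) \<le> a k / e k"
  shows "a (Suc k) \<le> a k"
proof -
  have "a (Suc k) = (a (Suc k) / e (Suc k)) * e (Suc k)" using assms(2)[of "Suc k"] by simp
  also have "\<dots> \<le> (a k / e k) * e (Suc k)"
    using assms(2,4) by (intro mult_right_mono) (auto intro: less_imp_le)
  also have "\<dots> \<le> (a k / e k) * e k"
    using assms(1-3) by (intro mult_left_mono) (auto intro: less_imp_le divide_nonneg_pos)
  also have "\<dots> = a k" using assms(2)[of k] by simp
  finally show ?thesis .
qed

lemma monotone_op_subset: "monotone_op F D \<Longrightarrow> E \<subseteq> D \<Longrightarrow> monotone_op F E"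
  unfolding monotone_op_def by blast

lemma monotone_opD:
  "monotone_op F D \<Longrightarrow> u \<in> D \<Longrightarrow> v \<in> D \<Longrightarrow> inner (F v) (u - v) \<le> inner (F u) (u - v)"
  unfolding monotone_op_def by (simp add: inner_diff_left)

lemma norm_le_SUP_norm:
  fixes f :: "'a::metric_space \<Rightarrow> 'b::real_normed_vector"
  assumes "compact X" "continuous_on X f" "v \<in> X"
  shows "norm (f v) \<le> (SUP z\<in>X. norm (f z))"
proof -
  have "bounded ((\<lambda>z. norm (f z)) ` X)"
    using compact_imp_bounded[OF compact_continuous_image[OF continuous_on_norm[OF assms(2)] assms(1)]] .
  then show ?thesis
    using assms(3) by (auto intro: cSUP_upper bounded_imp_bdd_above)
qed

lemma Gap_nonneg:
  fixes F :: "'a::real_inner \<Rightarrow> 'a"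
  assumes "compact X" "continuous_on X F" "z \<in> X"
  shows "0 \<le> Gap z F X"
proof -
  have "continuous_on X (\<lambda>v. inner (F v) (z - v))"
    by (intro continuous_intros assms(2))
  then have "bdd_above ((\<lambda>v. inner (F v) (z - v)) ` X)"
    using assms(1) by (intro bounded_imp_bdd_above compact_imp_bounded compact_continuous_image)
  then show ?thesis
    unfolding Gap_def using assms(3) by (rule cSUP_upper2) simp
qed

lemma Gap_le:
  assumes "X \<noteq> {}" "\<And>v. v \<in> X \<Longrightarrow> inner (F v) (z - v) \<le> B"
  shows "Gap z F X \<le> B"
  unfolding Gap_def using assms by (rule cSUP_least)

definition weighted_mean :: "(nat \<Rightarrow> real) \<Rightarrow> (nat \<Rightarrow> 'a::real_vector) \<Rightarrow> nat \<Rightarrow> 'a" where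
  "weighted_mean a y k = (1 / (\<Sum>j<k. a j)) *\<^sub>R (\<Sum>j<k. a j *\<^sub>R y j)"

lemma weighted_mean_in_convex:
  assumes "convex X" "\<And>j. 0 \<le> a j" "0 < (\<Sum>j<k. a j)" "\<And>j. y j \<in> X"
  shows "weighted_mean a y k \<in> X"
proof -
  have "weighted_mean a y k = (\<Sum>j<k. (a j / (\<Sum>j<k. a j)) *\<^sub>R y j)"
    by (simp add: weighted_mean_def scaleR_sum_right)
  also have "\<dots> \<in> X"
    using assms by (intro convex_sum) (auto simp: sum_divide_distrib[symmetric])
  finally show ?thesis .
qed

lemma inner_weighted_mean_diff:
  fixes y :: "nat \<Rightarrow> 'a::real_inner"
  assumes "(\<Sum>j<k. a j) \<noteq> 0"
  shows "(\<Sum>j<k. a j) * inner c (weighted_mean a y k - z) = (\<Sum>j<k. a j * inner c (y j - z))"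
proof -
  have "(\<Sum>j<k. a j) * inner c (weighted_mean a y k) = (\<Sum>j<k. a j * inner c (y j))"
    using assms by (simp add: weighted_mean_def inner_sum_right)
  then show ?thesis
    by (simp add: inner_diff_right right_diff_distrib sum_subtractf sum_distrib_right)
qed

(* Index subtraction is truncated, so x (0 - 1) = x 0 encodes the convention x_(-1) = x_0. *)

locale ineireg =
  fixes F H :: "'a::euclidean_space \<Rightarrow> 'a" and X \<Omega> :: "'a set"
    and LF LH lamlo lamup :: real
    and alpha lam eta :: "nat \<Rightarrow> real"
    and x y w w' :: "nat \<Rightarrow> 'a"
  assumes monoF: "monotone_op F X"
    and lipF: "LF-lipschitz_on \<Omega> F" and lipH: "LH-lipschitz_on \<Omega> H"
    and X_ne: "X \<noteq> {}" and X_compact: "compact X" and X_convex: "convex X"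
    and \<Omega>_closed: "closed \<Omega>" and \<Omega>_convex: "convex \<Omega>" and X_sub: "X \<subseteq> \<Omega>"
    and alpha_nonneg: "\<And>k. 0 \<le> alpha k" and eta_pos: "\<And>k. 0 < eta k"
    and x0: "x 0 \<in> X"
    and w_eq: "\<And>k. w k = x k + alpha k *\<^sub>R (x k - x (k - 1))"
    and w'_eq: "\<And>k. w' k = closest_point \<Omega> (w k)"
    and y_eq: "\<And>k. y k = closest_point X (w k - lam k *\<^sub>R (F (w' k) + eta k *\<^sub>R H (w' k)))"
    and x_Suc: "\<And>k. x (Suc k) = closest_point X (w k - lam k *\<^sub>R (F (y k) + eta k *\<^sub>R H (y k)))"
    and eta_noninc: "\<And>k. eta (Suc k) \<le> eta k"
    and alpha0: "alpha 0 \<le> 1"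
    and ratio_noninc: "\<And>k. alpha (Suc k) / eta (Suc k) \<le> alpha k / eta k"
    and lamlo_pos: "0 < lamlo"
    and lamup_le: "lamup \<le> 1 / (LF + eta 0 * LH)"
    and lam_bounds: "\<And>k. lamlo \<le> lam k \<and> lam k \<le> lamup"
begin

definition G :: "nat \<Rightarrow> 'a \<Rightarrow> 'a" where
  "G k v = F v + eta k *\<^sub>R H v"

definition delta :: "nat \<Rightarrow> real" where
  "delta k = alpha k * (1 + alpha k) * (norm (x k - x (k - 1)))\<^sup>2"

abbreviation DX :: real where
  "DX \<equiv> diameter X"

abbreviation CH :: real where
  "CH \<equiv> SUP z\<in>X. norm (H z)"

lemma X_closed: "closed X"
  using X_compact by (rule compact_imp_closed)

lemma x_in_X: "x k \<in> X"
  by (cases k) (auto simp: x0 x_Suc closest_point_in_set[OF X_closed X_ne])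

lemma y_in_X: "y k \<in> X"
  by (simp add: y_eq closest_point_in_set[OF X_closed X_ne])

lemma w'_in_\<Omega>: "w' k \<in> \<Omega>"
  using X_ne X_sub by (auto simp: w'_eq intro: closest_point_in_set[OF \<Omega>_closed])

lemma norm_diff_le_DX: "u \<in> X \<Longrightarrow> v \<in> X \<Longrightarrow> norm (u - v) \<le> DX"
  using diameter_bounded_bound[OF compact_imp_bounded[OF X_compact]] by (simp add: dist_norm)

lemma DX_nonneg: "0 \<le> DX"
  using X_compact by (intro diameter_ge_0 compact_imp_bounded)

lemma norm_H_le_CH: "v \<in> X \<Longrightarrow> norm (H v) \<le> CH"
  using X_compact lipschitz_on_continuous_on[OF lipschitz_on_subset[OF lipH X_sub]]
  by (rule norm_le_SUP_norm)

lemma CH_nonneg: "0 \<le> CH"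
  using X_ne norm_H_le_CH by (meson all_not_in_conv norm_ge_zero order_trans)

lemma lam_pos: "0 < lam k"
  using lam_bounds[of k] lamlo_pos by linarith

lemma alpha_noninc: "alpha (Suc k) \<le> alpha k"
  using alpha_nonneg eta_pos eta_noninc ratio_noninc by (rule nonincreasing_of_ratio_nonincreasing)

lemma lam_Lipschitz_le_1: "lam k * (LF + eta k * LH) \<le> 1"
proof -
  have LF: "0 \<le> LF" and LH: "0 \<le> LH"
    using lipF lipH by (auto intro: lipschitz_on_nonneg)
  then have L0: "0 \<le> LF + eta 0 * LH"
    using eta_pos[of 0] by simp
  have "decseq eta"
    using eta_noninc by (rule decseq_SucI)
  then have "eta k \<le> eta 0"
    by (simp add: decseqD)
  then have "lam k * (LF + eta k * LH) \<le> lamup * (LF + eta 0 * LH)"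
    using lam_bounds[of k] lam_pos[of k] LF LH eta_pos[of k]
    by (intro mult_mono add_mono mult_right_mono) auto
  also have "\<dots> \<le> 1"
    using lamup_le L0 by (cases "LF + eta 0 * LH = 0") (auto simp: le_divide_eq)
  finally show ?thesis .
qed

lemma G_lipschitz: "(LF + eta k * LH)-lipschitz_on \<Omega> (G k)"
  unfolding G_def using lipF lipH eta_pos[of k]
  by (intro lipschitz_on_add lipschitz_on_cmult_nonneg) auto

lemma G_diff_le: "norm (G k (y k) - G k (w' k)) \<le> (LF + eta k * LH) * norm (y k - w k)"
proof -
  have "closest_point \<Omega> (y k) = y k"
    using X_sub y_in_X by (auto intro: closest_point_self)
  then have "norm (y k - w' k) \<le> norm (y k - w k)"
    using closest_point_lipschitz[OF \<Omega>_convex \<Omega>_closed, of "y k" "w k"] X_sub X_ne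
    by (auto simp: w'_eq dist_norm)
  moreover have "norm (G k (y k) - G k (w' k)) \<le> (LF + eta k * LH) * norm (y k - w' k)"
    using lipschitz_onD[OF G_lipschitz] X_sub y_in_X w'_in_\<Omega> by (fastforce simp: dist_norm)
  ultimately show ?thesis
    using lipschitz_on_nonneg[OF G_lipschitz] by (meson mult_left_mono order_trans)
qed

lemma iteration_estimate:
  assumes z: "z \<in> X"
  shows "2 * lam k * inner (F z) (y k - z)
    \<le> (norm (x k - z))\<^sup>2 - (norm (x (Suc k) - z))\<^sup>2
       + alpha k * ((norm (x k - z))\<^sup>2 - (norm (x (k - 1) - z))\<^sup>2)
       + delta k + 2 * lamup * CH * DX * eta k"
proof -
  have extragradient: "2 * lam k * inner (G k (y k)) (y k - z) \<le> (norm (w k - z))\<^sup>2 - (norm (x (Suc k) - z))\<^sup>2"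
    using X_convex X_closed z y_eq[folded G_def] x_Suc[folded G_def] G_diff_le
    by (rule extragradient_projection_ineq) (use lam_pos[of k] lam_Lipschitz_le_1 in auto)
  have "w k - z = (1 + alpha k) *\<^sub>R (x k - z) - alpha k *\<^sub>R (x (k - 1) - z)"
    by (simp add: w_eq algebra_simps)
  then have inertia: "(norm (w k - z))\<^sup>2
      = (1 + alpha k) * (norm (x k - z))\<^sup>2 - alpha k * (norm (x (k - 1) - z))\<^sup>2 + delta k"
    by (simp add: norm_extrapolation_sq delta_def)
  have "\<bar>inner (H (y k)) (y k - z)\<bar> \<le> norm (H (y k)) * norm (y k - z)"
    by (rule Cauchy_Schwarz_ineq2)
  also have "\<dots> \<le> CH * DX"
    using norm_H_le_CH norm_diff_le_DX y_in_X z CH_nonneg by (intro mult_mono) auto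
  finally have "- (eta k * CH * DX) \<le> eta k * inner (H (y k)) (y k - z)"
    using eta_pos[of k] mult_left_mono[of "- (CH * DX)" "inner (H (y k)) (y k - z)" "eta k"]
    by (simp add: abs_le_iff)
  moreover have "inner (F z) (y k - z) \<le> inner (F (y k)) (y k - z)"
    using monotone_opD[OF monoF y_in_X z] .
  ultimately have "inner (F z) (y k - z) - eta k * CH * DX \<le> inner (G k (y k)) (y k - z)"
    by (simp add: G_def inner_add_left)
  then have "2 * lam k * (inner (F z) (y k - z) - eta k * CH * DX) \<le> 2 * lam k * inner (G k (y k)) (y k - z)"
    using lam_pos[of k] by (intro mult_left_mono) auto
  moreover have "lam k * (eta k * CH * DX) \<le> lamup * (eta k * CH * DX)"
    using lam_bounds[of k] eta_pos[of k] CH_nonneg DX_nonneg by (intro mult_right_mono) auto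
  ultimately show ?thesis
    using extragradient inertia by (simp add: algebra_simps)
qed

lemma ergodic_estimate:
  assumes z: "z \<in> X" and k: "k \<ge> 1"
  shows "2 * (\<Sum>j<k. lam j) * inner (F z) (weighted_mean lam y k - z)
    \<le> DX\<^sup>2 + (\<Sum>j<k. delta j) + 2 * lamup * CH * DX * (\<Sum>j<k. eta j)"
proof -
  define \<phi> where "\<phi> j = (norm (x j - z))\<^sup>2" for j
  have "0 < (\<Sum>j<k. lam j)"
    using k lam_pos by (intro sum_pos) (auto simp: lessThan_empty_iff)
  then have \<Lambda>: "(\<Sum>j<k. lam j) \<noteq> 0"
    by simp
  have "2 * (\<Sum>j<k. lam j) * inner (F z) (weighted_mean lam y k - z)
      = (\<Sum>j<k. 2 * lam j * inner (F z) (y j - z))"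
    unfolding mult.assoc inner_weighted_mean_diff[OF \<Lambda>] by (simp add: sum_distrib_left)
  also have "\<dots> \<le> (\<Sum>j<k. (\<phi> j - \<phi> (Suc j) + alpha j * (\<phi> j - \<phi> (j - 1)))
                       + delta j + 2 * lamup * CH * DX * eta j)"
    unfolding \<phi>_def by (intro sum_mono iteration_estimate z)
  also have "\<dots> = (\<Sum>j<k. \<phi> j - \<phi> (Suc j) + alpha j * (\<phi> j - \<phi> (j - 1)))
                  + (\<Sum>j<k. delta j) + 2 * lamup * CH * DX * (\<Sum>j<k. eta j)"
    by (simp add: sum.distrib sum_distrib_left)
  also have "\<dots> \<le> DX\<^sup>2 + (\<Sum>j<k. delta j) + 2 * lamup * CH * DX * (\<Sum>j<k. eta j)"
  proof -
    have "\<phi> j \<le> DX\<^sup>2" for j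
      unfolding \<phi>_def using norm_diff_le_DX[OF x_in_X z] by (intro power_mono) auto
    then have "(\<Sum>j<k. \<phi> j - \<phi> (Suc j) + alpha j * (\<phi> j - \<phi> (j - 1))) \<le> DX\<^sup>2"
      using alpha_nonneg alpha_noninc alpha0 k by (intro inertial_telescoping_le) (auto simp: \<phi>_def)
    then show ?thesis by simp
  qed
  finally show ?thesis .
qed

theorem gap_bound:
  assumes k: "k \<ge> 1"
  shows "0 \<le> Gap (weighted_mean lam y k) F X \<and>
    Gap (weighted_mean lam y k) F X \<le> (1 / real k) * (DX\<^sup>2 / (2 * lamlo))
      + ((\<Sum>j<k. delta j) / real k) * (1 / (2 * lamlo))
      + ((\<Sum>j<k. eta j) / real k) * (lamup * CH * DX / lamlo)"
proof
  have \<Lambda>_lower: "real k * lamlo \<le> (\<Sum>j<k. lam j)"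
    using sum_mono[of "{..<k}" "\<lambda>_. lamlo" lam] lam_bounds by simp
  moreover have "0 < real k * lamlo"
    using k lamlo_pos by simp
  ultimately have \<Lambda>_pos: "0 < (\<Sum>j<k. lam j)"
    by linarith
  show "0 \<le> Gap (weighted_mean lam y k) F X"
    using X_compact lipschitz_on_continuous_on[OF lipschitz_on_subset[OF lipF X_sub]]
  proof (rule Gap_nonneg)
    show "weighted_mean lam y k \<in> X"
      using X_convex lam_pos \<Lambda>_pos y_in_X by (intro weighted_mean_in_convex) (auto intro: less_imp_le)
  qed
  define N where "N = DX\<^sup>2 + (\<Sum>j<k. delta j) + 2 * lamup * CH * DX * (\<Sum>j<k. eta j)"
  have "0 \<le> N"
    unfolding N_def delta_def using alpha_nonneg eta_pos CH_nonneg DX_nonneg lamlo_pos lam_bounds[of 0]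
    by (intro add_nonneg_nonneg mult_nonneg_nonneg sum_nonneg) (auto intro: less_imp_le)
  have "inner (F v) (weighted_mean lam y k - v) \<le> N / (2 * (\<Sum>j<k. lam j))" if "v \<in> X" for v
    using ergodic_estimate[OF that k] \<Lambda>_pos by (simp add: N_def pos_le_divide_eq mult.commute)
  then have "Gap (weighted_mean lam y k) F X \<le> N / (2 * (\<Sum>j<k. lam j))"
    using X_ne by (intro Gap_le)
  also have "\<dots> \<le> N / (2 * (real k * lamlo))"
    using \<open>0 \<le> N\<close> \<Lambda>_lower \<Lambda>_pos k lamlo_pos by (intro divide_left_mono) auto
  also have "\<dots> = (1 / real k) * (DX\<^sup>2 / (2 * lamlo))
      + ((\<Sum>j<k. delta j) / real k) * (1 / (2 * lamlo))
      + ((\<Sum>j<k. eta j) / real k) * (lamup * CH * DX / lamlo)"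
    unfolding N_def using k lamlo_pos by (simp add: field_simps)
  finally show "Gap (weighted_mean lam y k) F X \<le> \<dots>" .
qed

end

theorem proposition3p5:
  fixes F H :: "'a::euclidean_space \<Rightarrow> 'a"
    and DomF DomH X \<Omega> :: "'a set"
    and LF LH lamlo lamup :: real
    and alpha lam eta :: "nat \<Rightarrow> real"
    and x y w w' :: "nat \<Rightarrow> 'a"
  assumes monoF: "monotone_op F DomF" and monoH: "monotone_op H DomH"
    and LF_pos: "LF > 0" and LH_pos: "LH > 0"
    and lipF: "LF-lipschitz_on DomF F" and lipH: "LH-lipschitz_on DomH H"
    and X_ne: "X \<noteq> {}" and X_compact: "compact X" and X_convex: "convex X"
    and \<Omega>_closed: "closed \<Omega>" and \<Omega>_convex: "convex \<Omega>"
    and X_sub: "X \<subseteq> \<Omega>" and \<Omega>_sub: "\<Omega> \<subseteq> DomF \<inter> DomH"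
    and Q_ne: "VI_sol F X \<noteq> {}"
    and alpha_nonneg: "\<And>k. alpha k \<ge> 0"
    and eta_pos: "\<And>k. eta k > 0"
    and x0: "x 0 \<in> X"
    and w_def: "\<And>k. w k = x k + alpha k *\<^sub>R (x k - x (k - 1))"
    and w'_def: "\<And>k. w' k = closest_point \<Omega> (w k)"
    and y_def: "\<And>k. y k = closest_point X (w k - lam k *\<^sub>R (F (w' k) + eta k *\<^sub>R H (w' k)))"
    and x_def: "\<And>k. x (Suc k) = closest_point X (w k - lam k *\<^sub>R (F (y k) + eta k *\<^sub>R H (y k)))"
    and eta_noninc: "\<And>k. eta (Suc k) \<le> eta k"
    and alpha0: "alpha 0 \<le> 1"
    and ratio_noninc: "\<And>k. alpha (Suc k) / eta (Suc k) \<le> alpha k / eta k"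
    and lamlo_pos: "0 < lamlo" and lamlo_le: "lamlo \<le> lamup"
    and lamup_le: "lamup \<le> 1 / (LF + eta 0 * LH)"
    and lam_bounds: "\<And>k. lamlo \<le> lam k \<and> lam k \<le> lamup"
    and delta_sum: "summable (\<lambda>k. alpha k * (1 + alpha k) * (norm (x k - x (k - 1)))\<^sup>2 / eta k)"
  shows "\<forall>k\<ge>1.
    (let \<delta> = (\<lambda>j. alpha j * (1 + alpha j) * (norm (x j - x (j - 1)))\<^sup>2);
         DX = diameter X;
         CH = (SUP z\<in>X. norm (H z));
         \<Lambda> = (\<Sum>j<k. lam j);
         ybar = (1 / \<Lambda>) *\<^sub>R (\<Sum>j<k. lam j *\<^sub>R y j)
     in 0 \<le> Gap ybar F X \<and>
        Gap ybar F X \<le> (1 / real k) * (DX\<^sup>2 / (2 * lamlo))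
          + ((\<Sum>j<k. \<delta> j) / real k) * (1 / (2 * lamlo))
          + ((\<Sum>j<k. eta j) / real k) * (lamup * CH * DX / lamlo))"
proof -
  interpret ineireg F H X \<Omega> LF LH lamlo lamup alpha lam eta x y w w'
  proof
    show "monotone_op F X"
      using monoF by (rule monotone_op_subset) (use X_sub \<Omega>_sub in blast)
    show "LF-lipschitz_on \<Omega> F" "LH-lipschitz_on \<Omega> H"
      using lipF lipH \<Omega>_sub by (auto intro: lipschitz_on_subset)
  qed (use assms in auto)
  show ?thesis
    using gap_bound unfolding Let_def weighted_mean_def delta_def by simp
qed

end
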